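(* Let $U_e=U_f=U\ge0$, $\beta<-2$, $\kappa_g\ge16$, $\alpha\le 2\min\{\beta,-3\}-1$, and let $g$ be the deterministic source. Let $V_k,W_k$ ($k\ne0$) be any complex numbers with $|V_k|,|W_k|\le\Xi$, $V_{-k}=\overline{V_k}$, $W_{-k}=\overline{W_k}$, and define $$\vartheta_k:=i|k|^{-2}\sum_{j\notin\{0,k\}}|k-j|^\beta\gamma_j\,U\big[(e_{k-j}\cdot j)V_{k-j}+(f_{k-j}\cdot j)W_{k-j}\big].$$ Then there is a constant $C<\infty$ depending only on $(\gamma_k)$, $c_g$, $\kappa_g$, $\alpha$, $\beta$ such that for all $k\ne0$, $$|\vartheta_k|\le C\,U\Xi\,|k|^{-2}K_\beta(|k|),\qquad K_\beta(s):=\min\{1,(s/(2\kappa_g))^{\beta}\}.$$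
   Context: Craya–Herring basis: for $k=(k_x,k_y,k_z)\in\mathbb Z^3$ with $|k_h|:=\sqrt{k_x^2+k_y^2}>0$, $e_k=(k_y,-k_x,0)/|k_h|$, $f_k=(k_xk_z,k_yk_z,-|k_h|^2)/(|k||k_h|)$; for $k\ne0$ on the $z$-axis, a fixed orthonormal pair of unit vectors orthogonal to $k$. Source coefficients: complex $\gamma_k$ ($k\in\mathbb Z^3\setminus\{0\}$), $\gamma_{-k}=\overline{\gamma_k}$, with constants $c_g\ge0$, $\kappa_g>1$, $\alpha<0$ such that $|\gamma_k|\le c_g|k|^\alpha$ for $|k|\ge\kappa_g$ (the deterministic source is $\Delta^{-1}g=\sum_{k\ne0}\gamma_ke^{ik\cdot x}$ on $[0,2\pi]^3$, and $\vartheta=-\Delta^{-1}(u\cdot\nabla\Delta^{-1}g)$ for $u=\sum_{k\ne0}|k|^\beta U[e_kV_k+f_kW_k]e^{ik\cdot x}$). *)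

theory Defs
  imports "HOL-Analysis.Analysis"
begin

type_synonym lat = "int \<times> int \<times> int"
type_synonym vec3 = "real \<times> real \<times> real"

definition lsub :: "lat \<Rightarrow> lat \<Rightarrow> lat" where
  "lsub k j = (case k of (a,b,c) \<Rightarrow> case j of (x,y,z) \<Rightarrow> (a-x, b-y, c-z))"

definition lneg :: "lat \<Rightarrow> lat" where
  "lneg k = (case k of (a,b,c) \<Rightarrow> (-a,-b,-c))"

definition rv :: "lat \<Rightarrow> vec3" where
  "rv k = (case k of (a,b,c) \<Rightarrow> (real_of_int a, real_of_int b, real_of_int c))"

definition dot3 :: "vec3 \<Rightarrow> vec3 \<Rightarrow> real" where
  "dot3 u v = (case u of (a,b,c) \<Rightarrow> case v of (x,y,z) \<Rightarrow> a*x + b*y + c*z)"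

definition lnorm :: "lat \<Rightarrow> real" where
  "lnorm k = (case k of (a,b,c) \<Rightarrow> sqrt (real_of_int (a^2 + b^2 + c^2)))"

definition hnorm :: "lat \<Rightarrow> real" where
  "hnorm k = (case k of (a,b,c) \<Rightarrow> sqrt (real_of_int (a^2 + b^2)))"

text \<open>Craya--Herring basis; ez, fz give the fixed orthonormal pair for k on the z-axis.\<close>
definition CH_e :: "(lat \<Rightarrow> vec3) \<Rightarrow> lat \<Rightarrow> vec3" where
  "CH_e ez k = (if hnorm k > 0 then
     (case k of (a,b,c) \<Rightarrow> (real_of_int b / hnorm k, - real_of_int a / hnorm k, 0))
     else ez k)"

definition CH_f :: "(lat \<Rightarrow> vec3) \<Rightarrow> lat \<Rightarrow> vec3" where
  "CH_f fz k = (if hnorm k > 0 then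
     (case k of (a,b,c) \<Rightarrow>
        (real_of_int (a*c) / (lnorm k * hnorm k),
         real_of_int (b*c) / (lnorm k * hnorm k),
         - ((hnorm k)^2) / (lnorm k * hnorm k)))
     else fz k)"

definition axis_pair :: "(lat \<Rightarrow> vec3) \<Rightarrow> (lat \<Rightarrow> vec3) \<Rightarrow> bool" where
  "axis_pair ez fz \<longleftrightarrow> (\<forall>k. k \<noteq> (0,0,0) \<and> hnorm k = 0 \<longrightarrow>
      dot3 (ez k) (ez k) = 1 \<and> dot3 (fz k) (fz k) = 1 \<and> dot3 (ez k) (fz k) = 0 \<and>
      dot3 (ez k) (rv k) = 0 \<and> dot3 (fz k) (rv k) = 0)"

definition Kbeta :: "real \<Rightarrow> real \<Rightarrow> real \<Rightarrow> real" where
  "Kbeta kg \<beta> s = min 1 ((s / (2*kg)) powr \<beta>)"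

definition theta :: "(lat \<Rightarrow> vec3) \<Rightarrow> (lat \<Rightarrow> vec3) \<Rightarrow> (lat \<Rightarrow> complex) \<Rightarrow> real \<Rightarrow> real
    \<Rightarrow> (lat \<Rightarrow> complex) \<Rightarrow> (lat \<Rightarrow> complex) \<Rightarrow> lat \<Rightarrow> complex" where
  "theta ez fz \<gamma> \<beta> U V W k =
     \<i> * complex_of_real (lnorm k powr (-2)) *
     infsum (\<lambda>j. complex_of_real (lnorm (lsub k j) powr \<beta>) * \<gamma> j * complex_of_real U *
        (complex_of_real (dot3 (CH_e ez (lsub k j)) (rv j)) * V (lsub k j)
       + complex_of_real (dot3 (CH_f fz (lsub k j)) (rv j)) * W (lsub k j)))
       {j. j \<noteq> (0,0,0) \<and> j \<noteq> k}"

end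

theory Submission
  imports Defs
begin

text \<open>
  Each summand of \<open>\<vartheta>\<^sub>k\<close> is at most \<open>2 G U \<Xi> |k-j|\<^sup>\<beta> |j|\<^sup>\<alpha>\<^sup>+\<^sup>1\<close>: the Craya--Herring
  vectors are unit vectors, so \<open>|e\<cdot>j|, |f\<cdot>j| \<le> |j|\<close>, and \<open>|\<gamma>\<^sub>j| \<le> G |j|\<^sup>\<alpha>\<close> for all \<open>j \<noteq> 0\<close>
  once the finitely many small modes are absorbed into \<open>G\<close>. The lattice convolution
  \<open>\<Sum>\<^sub>j |k-j|\<^sup>\<beta> |j|\<^sup>a\<close> (\<open>a = \<alpha>+1\<close>) is \<open>O(|k|\<^sup>\<beta>)\<close>: the triangle inequality gives
  \<open>|k|\<^sup>-\<^sup>\<beta> \<le> 2\<^sup>-\<^sup>\<beta> (|k-j|\<^sup>-\<^sup>\<beta> + |j|\<^sup>-\<^sup>\<beta>)\<close>, and AM--GM splits the cross term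
  \<open>|k-j|\<^sup>\<beta> |j|\<^sup>a\<^sup>-\<^sup>\<beta>\<close> into two lattice sums that converge because \<open>2\<beta>, 2(a-\<beta>) < -3\<close>.
  Finally \<open>|k|\<^sup>\<beta> \<le> K\<^sub>\<beta>(|k|)\<close> since \<open>2\<kappa>\<^sub>g \<ge> 1\<close>.
\<close>

section \<open>Lattice geometry\<close>

lemma rv_lsub: "rv (lsub k j) = rv k - rv j"
  by (cases k; cases j) (simp add: rv_def lsub_def)

lemma lnorm_eq_norm_rv: "lnorm k = norm (rv k)"
  by (cases k) (simp add: lnorm_def rv_def norm_prod_def power2_eq_square)

lemma dot3_eq_inner: "dot3 u v = inner u v"
  by (cases u; cases v) (simp add: dot3_def inner_prod_def)

lemma lsub_eq_0_iff: "lsub k j = (0,0,0) \<longleftrightarrow> j = k"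
  by (cases k; cases j) (auto simp: lsub_def)

lemma bij_lsub: "bij (lsub k)"
  by (rule o_bij[of "lsub k"]) (auto simp: lsub_def fun_eq_iff split: prod.splits)

lemma lnorm_triangle_lsub: "lnorm k \<le> lnorm (lsub k j) + lnorm j"
  unfolding lnorm_eq_norm_rv rv_lsub using norm_triangle_ineq[of "rv k - rv j" "rv j"] by simp

lemma lnorm_ge_1:
  assumes "k \<noteq> (0,0,0)"
  shows "1 \<le> lnorm k"
proof -
  obtain a b c where k: "k = (a,b,c)" by (cases k)
  have "1 \<le> a^2 + b^2 + c^2"
    using assms k by (smt (verit) power2_less_eq_zero_iff zero_le_power2 int_one_le_iff_zero_less)
  then show ?thesis by (simp add: lnorm_def k del: of_int_add of_int_power)
qed

lemma abs_coord_le_lnorm: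
  "\<bar>real_of_int a\<bar> \<le> lnorm (a,b,c) \<and> \<bar>real_of_int b\<bar> \<le> lnorm (a,b,c) \<and> \<bar>real_of_int c\<bar> \<le> lnorm (a,b,c)"
  unfolding lnorm_def by (auto simp del: of_int_add of_int_power intro!: real_le_rsqrt)

lemma finite_lnorm_less: "finite {j. lnorm j < r}"
proof (rule finite_subset)
  define n where "n = \<lceil>r\<rceil>"
  have coord: "x \<in> {-n..n}" if "\<bar>real_of_int x\<bar> < r" for x
  proof -
    have "real_of_int \<bar>x\<bar> < real_of_int n"
      using that le_of_int_ceiling[of r] unfolding n_def by linarith
    then show ?thesis by auto
  qed
  show "{j. lnorm j < r} \<subseteq> {-n..n} \<times> {-n..n} \<times> {-n..n}"
  proof safe
    fix a b c assume "lnorm (a,b,c) < r"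
    with abs_coord_le_lnorm[of a b c] show "a \<in> {-n..n}" "b \<in> {-n..n}" "c \<in> {-n..n}"
      by (meson coord order.strict_trans1)+
  qed
qed simp

lemma hnorm_nonneg: "0 \<le> hnorm k"
  by (cases k) (simp add: hnorm_def)

lemma norm_real_triple: "norm (x::real, y::real, z::real) = sqrt (x^2 + y^2 + z^2)"
  by (simp add: norm_prod_def)

lemma norm_CH_e:
  assumes "axis_pair ez fz" and "m \<noteq> (0,0,0)"
  shows "norm (CH_e ez m) = 1"
proof (cases "hnorm m > 0")
  case True
  obtain a b c where m: "m = (a,b,c)" by (cases m)
  define h where "h = hnorm m"
  have sqrt_h: "sqrt ((real_of_int b)^2 + (real_of_int a)^2) = h" by (simp add: h_def hnorm_def m add.commute)
  have "CH_e ez m = (1/h) *\<^sub>R (real_of_int b, - real_of_int a, 0)"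
    using True by (simp add: CH_e_def m h_def)
  then have "norm (CH_e ez m) = \<bar>1/h\<bar> * norm (real_of_int b, - real_of_int a, 0::real)"
    by (simp only: norm_scaleR)
  also have "\<dots> = 1" using True by (simp add: norm_real_triple sqrt_h h_def)
  finally show ?thesis .
next
  case False
  then have "hnorm m = 0" using hnorm_nonneg[of m] by linarith
  with assms have "dot3 (ez m) (ez m) = 1" unfolding axis_pair_def by blast
  with False show ?thesis by (simp add: CH_e_def dot3_eq_inner norm_eq_sqrt_inner)
qed

lemma norm_CH_f:
  assumes "axis_pair ez fz" and "m \<noteq> (0,0,0)"
  shows "norm (CH_f fz m) = 1"
proof (cases "hnorm m > 0")
  case True
  obtain a b c where m: "m = (a,b,c)" by (cases m)
  define h L where "h = hnorm m" and "L = lnorm m"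
  have h2: "h^2 = (real_of_int a)^2 + (real_of_int b)^2" by (simp add: h_def hnorm_def m)
  have L2: "L^2 = h^2 + (real_of_int c)^2" by (simp add: L_def h2 lnorm_def m)
  have "L > 0" using lnorm_ge_1[OF assms(2)] by (simp add: L_def)
  have "(real_of_int (a*c))^2 + (real_of_int (b*c))^2 + (h^2)^2 = (L * h)^2"
    unfolding power_mult_distrib[of L h] L2 h2 of_int_mult by algebra
  then have "norm (real_of_int (a*c), real_of_int (b*c), - (h^2)) = L * h"
    using True \<open>L > 0\<close> by (simp add: norm_real_triple h_def)
  moreover have "CH_f fz m = (1/(L*h)) *\<^sub>R (real_of_int (a*c), real_of_int (b*c), - (h^2))"
    using True by (simp add: CH_f_def m h_def L_def)
  ultimately have "norm (CH_f fz m) = \<bar>1/(L*h)\<bar> * (L * h)"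
    by (simp only: norm_scaleR)
  then show ?thesis using True \<open>L > 0\<close> by (simp add: h_def)
next
  case False
  then have "hnorm m = 0" using hnorm_nonneg[of m] by linarith
  with assms have "dot3 (fz m) (fz m) = 1" unfolding axis_pair_def by blast
  with False show ?thesis by (simp add: CH_f_def dot3_eq_inner norm_eq_sqrt_inner)
qed

lemma abs_dot3_rv_le_lnorm: "norm u = 1 \<Longrightarrow> \<bar>dot3 u (rv j)\<bar> \<le> lnorm j"
  unfolding dot3_eq_inner lnorm_eq_norm_rv using Cauchy_Schwarz_ineq2[of u "rv j"] by simp

section \<open>Lattice sums\<close>

lemma power2_powr: "0 \<le> x \<Longrightarrow> (x^2) powr q = x powr (2 * q)" for x :: real
  by (simp add: powr_powr flip: powr_numeral)

lemma summable_on_one_plus_square_powr: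
  assumes "q < -1/2"
  shows "(\<lambda>a::int. (1 + (real_of_int a)^2) powr q) summable_on UNIV"
proof -
  let ?f = "\<lambda>a::int. (1 + (real_of_int a)^2) powr q"
  have "summable (\<lambda>n::nat. ?f (int n))"
  proof (rule summable_comparison_test')
    show "summable (\<lambda>n::nat. real n powr (2 * q))"
      using assms by (subst summable_real_powr_iff) simp
    fix n :: nat assume "1 \<le> n"
    then have "?f (int n) \<le> ((real n)^2) powr q"
      using assms by (intro powr_mono2') auto
    then show "norm (?f (int n)) \<le> real n powr (2 * q)" by (simp add: power2_powr)
  qed
  then have "(?f \<circ> int) summable_on UNIV" and "(?f \<circ> (\<lambda>n. - int n)) summable_on UNIV"
    by (simp_all add: o_def summable_on_UNIV_nonneg_real_iff)
  then have "?f summable_on (range int \<union> range (\<lambda>n. - int n))"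
    by (intro summable_on_union) (simp_all add: summable_on_reindex inj_on_def)
  also have "range int \<union> range (\<lambda>n. - int n) = UNIV"
  proof -
    have "a = int (nat a) \<or> a = - int (nat (- a))" for a :: int
      by auto
    then show ?thesis by blast
  qed
  finally show ?thesis .
qed

lemma summable_on_product_nonneg:
  fixes f :: "'a \<Rightarrow> real" and g :: "'b \<Rightarrow> real"
  assumes "f summable_on A" "g summable_on B" "\<And>x. 0 \<le> f x" "\<And>y. 0 \<le> g y"
  shows "(\<lambda>(x,y). f x * g y) summable_on A \<times> B"
proof (rule summable_on_SigmaI)
  show "((\<lambda>y. case (x,y) of (x,y) \<Rightarrow> f x * g y) has_sum f x * infsum g B) B" for x
    using has_sum_cmult_right[OF has_sum_infsum[OF assms(2)]] by simp
  show "(\<lambda>x. f x * infsum g B) summable_on A"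
    using summable_on_cmult_left[OF assms(1)] .
qed (use assms in auto)

text \<open>Since \<open>(1+a\<^sup>2)(1+b\<^sup>2)(1+c\<^sup>2) \<le> (2|m|)\<^sup>6\<close>, the sum of \<open>|m|\<^sup>p\<close> over \<open>\<int>\<^sup>3\<close> is dominated by
  a product of three one-dimensional sums.\<close>

lemma lnorm_powr_le_coord_product:
  assumes "p \<le> 0"
  shows "lnorm (a,b,c) powr p \<le> 2 powr (-p) *
    ((1 + (real_of_int a)^2) powr (p/6) * ((1 + (real_of_int b)^2) powr (p/6) * (1 + (real_of_int c)^2) powr (p/6)))"
proof (cases "(a,b,c) = (0::int,0::int,0::int)")
  case True
  then show ?thesis by (simp add: lnorm_def)
next
  case False
  define L where "L = lnorm (a,b,c)"
  define x y z where "x = 1 + (real_of_int a)^2" and "y = 1 + (real_of_int b)^2" and "z = 1 + (real_of_int c)^2"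
  have "L \<ge> 1" using lnorm_ge_1[OF False] by (simp add: L_def)
  have xyz: "x \<ge> 1" "y \<ge> 1" "z \<ge> 1" by (simp_all add: x_def y_def z_def)
  have "x + y + z = 3 + L^2" by (simp add: x_def y_def z_def L_def lnorm_def)
  also have "\<dots> \<le> 4 * L^2" using \<open>L \<ge> 1\<close> by (simp add: one_le_power)
  finally have sum_le: "x + y + z \<le> 4 * L^2" .
  have "x * y * z \<le> (x + y + z) * (x + y + z) * (x + y + z)"
    using xyz by (intro mult_mono) auto
  also have "\<dots> \<le> (4 * L^2) * (4 * L^2) * (4 * L^2)"
    using sum_le xyz by (intro mult_mono) auto
  also have "\<dots> = (2 * L) powr 6" using \<open>L \<ge> 1\<close> by (simp add: power_mult_distrib)
  finally have "((2 * L) powr 6) powr (p/6) \<le> (x * y * z) powr (p/6)"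
    using assms xyz by (intro powr_mono2') auto
  moreover have "((2 * L) powr 6) powr (p/6) = 2 powr p * L powr p"
    using \<open>L \<ge> 1\<close> by (simp only: powr_powr powr_mult) simp
  ultimately have "2 powr p * L powr p \<le> x powr (p/6) * (y powr (p/6) * z powr (p/6))"
    using xyz by (simp add: powr_mult)
  have "L powr p = 2 powr (-p) * (2 powr p * L powr p)"
    by (simp add: mult.assoc[symmetric] flip: powr_add)
  also have "\<dots> \<le> 2 powr (-p) * (x powr (p/6) * (y powr (p/6) * z powr (p/6)))"
    using \<open>2 powr p * L powr p \<le> _\<close> by (rule mult_left_mono) simp
  finally show ?thesis by (simp add: L_def x_def y_def z_def)
qed

lemma summable_on_lnorm_powr:
  assumes "p < -3"
  shows "(\<lambda>m. lnorm m powr p) summable_on UNIV"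
proof (rule summable_on_comparison_test)
  define f where "f = (\<lambda>a::int. (1 + (real_of_int a)^2) powr (p/6))"
  have f: "f summable_on UNIV" "\<And>a. 0 \<le> f a"
    using summable_on_one_plus_square_powr[of "p/6"] assms by (simp_all add: f_def)
  have "(\<lambda>(a,bc). f a * (case bc of (b,c) \<Rightarrow> f b * f c)) summable_on UNIV \<times> (UNIV \<times> UNIV)"
    using f by (intro summable_on_product_nonneg) (auto intro!: summable_on_product_nonneg)
  then show "(\<lambda>m. 2 powr (-p) * (case m of (a,b,c) \<Rightarrow> f a * (f b * f c))) summable_on UNIV"
    using summable_on_cmult_right[of _ UNIV "2 powr (-p)"] by (simp add: case_prod_unfold)
  show "lnorm m powr p \<le> 2 powr (-p) * (case m of (a,b,c) \<Rightarrow> f a * (f b * f c))" for m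
    using lnorm_powr_le_coord_product[of p] assms by (cases m) (simp add: f_def)
qed simp

lemma convolution_weight_le:
  fixes K N J a \<beta> :: real
  assumes "\<beta> \<le> 0" "0 < N" "0 < J" "0 < K" "K \<le> N + J"
  shows "K powr (-\<beta>) * (N powr \<beta> * J powr a)
    \<le> 2 powr (-\<beta>) * (J powr a + (N powr (2*\<beta>) + J powr (2*(a-\<beta>))) / 2)"
proof -
  have "K powr (-\<beta>) \<le> (2 * max N J) powr (-\<beta>)"
    using assms by (intro powr_mono2) auto
  also have "\<dots> = 2 powr (-\<beta>) * max N J powr (-\<beta>)"
    using assms by (simp add: powr_mult)
  also have "\<dots> \<le> 2 powr (-\<beta>) * (N powr (-\<beta>) + J powr (-\<beta>))"
    by (intro mult_left_mono) (auto simp: max_def)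
  finally have K_le: "K powr (-\<beta>) \<le> 2 powr (-\<beta>) * (N powr (-\<beta>) + J powr (-\<beta>))" .
  have "K powr (-\<beta>) * (N powr \<beta> * J powr a)
      \<le> 2 powr (-\<beta>) * (N powr (-\<beta>) + J powr (-\<beta>)) * (N powr \<beta> * J powr a)"
    using K_le by (rule mult_right_mono) simp
  also have "\<dots> = 2 powr (-\<beta>) * ((N powr (-\<beta>) * N powr \<beta>) * J powr a + N powr \<beta> * (J powr (-\<beta>) * J powr a))"
    by algebra
  also have "\<dots> = 2 powr (-\<beta>) * (J powr a + N powr \<beta> * J powr (a - \<beta>))"
    using assms by (simp flip: powr_add)
  also have "\<dots> \<le> 2 powr (-\<beta>) * (J powr a + ((N powr \<beta>)^2 + (J powr (a - \<beta>))^2) / 2)"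
    using sum_squares_bound[of "N powr \<beta>" "J powr (a - \<beta>)"] by (intro mult_left_mono) auto
  also have "\<dots> = 2 powr (-\<beta>) * (J powr a + (N powr (2*\<beta>) + J powr (2*(a-\<beta>))) / 2)"
    using assms by (simp add: powr_power)
  finally show ?thesis .
qed

definition lattice_zeta :: "real \<Rightarrow> real" where
  "lattice_zeta p = infsum (\<lambda>m. lnorm m powr p) UNIV"

lemma has_sum_lattice_zeta: "p < -3 \<Longrightarrow> ((\<lambda>m. lnorm m powr p) has_sum lattice_zeta p) UNIV"
  unfolding lattice_zeta_def by (rule has_sum_infsum[OF summable_on_lnorm_powr])

lemma has_sum_lattice_zeta_shifted:
  "p < -3 \<Longrightarrow> ((\<lambda>j. lnorm (lsub k j) powr p) has_sum lattice_zeta p) UNIV"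
  using has_sum_reindex_bij_betw[of "lsub k" UNIV UNIV "\<lambda>m. lnorm m powr p"] bij_lsub[of k]
    has_sum_lattice_zeta[of p]
  by simp

lemma lattice_convolution_bound:
  fixes a \<beta> :: real
  assumes "\<beta> \<le> 0" "a < -3" "2*\<beta> < -3" "2*(a-\<beta>) < -3" and "k \<noteq> (0,0,0)"
  defines "A \<equiv> {j. j \<noteq> (0,0,0) \<and> j \<noteq> k}"
  shows "(\<lambda>j. lnorm (lsub k j) powr \<beta> * lnorm j powr a) summable_on A"
    and "infsum (\<lambda>j. lnorm (lsub k j) powr \<beta> * lnorm j powr a) A
      \<le> 2 powr (-\<beta>) * (lattice_zeta a + (lattice_zeta (2*\<beta>) + lattice_zeta (2*(a-\<beta>))) / 2)
         * lnorm k powr \<beta>"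
proof -
  define K where "K = lnorm k"
  define h where "h j = lnorm (lsub k j) powr \<beta> * lnorm j powr a" for j
  define R where "R j = K powr \<beta> * (2 powr (-\<beta>) *
    (lnorm j powr a + (lnorm (lsub k j) powr (2*\<beta>) + lnorm j powr (2*(a-\<beta>))) / 2))" for j
  have "(R has_sum K powr \<beta> * (2 powr (-\<beta>) *
      (lattice_zeta a + (lattice_zeta (2*\<beta>) + lattice_zeta (2*(a-\<beta>))) / 2))) UNIV"
    unfolding R_def using assms
    by (intro has_sum_cmult_right has_sum_add has_sum_divide_const
        has_sum_lattice_zeta has_sum_lattice_zeta_shifted)
  then have R_UNIV_summable: "R summable_on UNIV"
    and R_UNIV: "infsum R UNIV = K powr \<beta> * (2 powr (-\<beta>) *
      (lattice_zeta a + (lattice_zeta (2*\<beta>) + lattice_zeta (2*(a-\<beta>))) / 2))"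
    by (auto simp: has_sum_imp_summable infsumI)
  have R_A: "R summable_on A" using R_UNIV_summable by (rule summable_on_subset_banach) simp
  have "K \<ge> 1" using lnorm_ge_1[OF assms(5)] by (simp add: K_def)
  have h_le_R: "h j \<le> R j" if "j \<in> A" for j
  proof -
    have "lnorm (lsub k j) \<ge> 1" "lnorm j \<ge> 1"
      using that lnorm_ge_1 lsub_eq_0_iff[of k j] by (auto simp: A_def)
    then have "K powr (-\<beta>) * h j \<le> 2 powr (-\<beta>) *
        (lnorm j powr a + (lnorm (lsub k j) powr (2*\<beta>) + lnorm j powr (2*(a-\<beta>))) / 2)"
      unfolding h_def K_def using assms(1) \<open>K \<ge> 1\<close> lnorm_triangle_lsub[of k j]
      by (intro convolution_weight_le) (auto simp: K_def)
    then have "K powr \<beta> * (K powr (-\<beta>) * h j) \<le> R j"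
      unfolding R_def by (rule mult_left_mono) simp
    moreover have "K powr \<beta> * K powr (-\<beta>) = 1"
      using \<open>K \<ge> 1\<close> by (simp flip: powr_add)
    ultimately show ?thesis by (simp add: mult.assoc[symmetric])
  qed
  have h_nonneg: "0 \<le> h j" for j by (simp add: h_def)
  have R_nonneg: "0 \<le> R j" for j by (simp add: R_def)
  show h_A: "(\<lambda>j. lnorm (lsub k j) powr \<beta> * lnorm j powr a) summable_on A"
    using summable_on_comparison_test[OF R_A h_le_R h_nonneg] by (simp add: h_def[abs_def])
  have "infsum h A \<le> infsum R A"
    using h_A R_A h_le_R by (intro infsum_mono) (simp_all add: h_def[abs_def])
  also have "\<dots> \<le> infsum R UNIV"
    using R_A R_UNIV_summable R_nonneg by (intro infsum_mono2) auto
  finally show "infsum (\<lambda>j. lnorm (lsub k j) powr \<beta> * lnorm j powr a) A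
      \<le> 2 powr (-\<beta>) * (lattice_zeta a + (lattice_zeta (2*\<beta>) + lattice_zeta (2*(a-\<beta>))) / 2)
         * lnorm k powr \<beta>"
    by (simp add: h_def[abs_def] R_UNIV K_def mult_ac)
qed

section \<open>The source term\<close>

lemma lnorm_powr_bound_everywhere:
  fixes \<gamma> :: "lat \<Rightarrow> 'a::real_normed_vector"
  assumes "c \<ge> 0" and "\<forall>k. k \<noteq> (0,0,0) \<and> lnorm k \<ge> r \<longrightarrow> norm (\<gamma> k) \<le> c * lnorm k powr \<alpha>"
  obtains G where "G \<ge> 0" and "\<forall>j. j \<noteq> (0,0,0) \<longrightarrow> norm (\<gamma> j) \<le> G * lnorm j powr \<alpha>"
proof
  define F where "F = {j. lnorm j < r}"
  define G where "G = c + (\<Sum>j\<in>F. norm (\<gamma> j) * lnorm j powr (-\<alpha>))"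
  have "finite F" unfolding F_def by (rule finite_lnorm_less)
  have sum_nonneg: "0 \<le> (\<Sum>j\<in>F. norm (\<gamma> j) * lnorm j powr (-\<alpha>))" by (intro sum_nonneg) simp
  then show "G \<ge> 0" using assms(1) by (simp add: G_def)
  show "\<forall>j. j \<noteq> (0,0,0) \<longrightarrow> norm (\<gamma> j) \<le> G * lnorm j powr \<alpha>"
  proof (intro allI impI)
    fix j :: lat assume "j \<noteq> (0,0,0)"
    then have "lnorm j \<ge> 1" by (rule lnorm_ge_1)
    show "norm (\<gamma> j) \<le> G * lnorm j powr \<alpha>"
    proof (cases "j \<in> F")
      case True
      have "norm (\<gamma> j) * lnorm j powr (-\<alpha>) \<le> G"
        using member_le_sum[OF True _ \<open>finite F\<close>, of "\<lambda>j. norm (\<gamma> j) * lnorm j powr (-\<alpha>)"] assms(1)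
        by (simp add: G_def)
      then have "norm (\<gamma> j) * lnorm j powr (-\<alpha>) * lnorm j powr \<alpha> \<le> G * lnorm j powr \<alpha>"
        by (rule mult_right_mono) simp
      with \<open>lnorm j \<ge> 1\<close> show ?thesis by (simp add: mult.assoc flip: powr_add)
    next
      case False
      then have "lnorm j \<ge> r" by (simp add: F_def)
      with assms(2) \<open>j \<noteq> (0,0,0)\<close> have "norm (\<gamma> j) \<le> c * lnorm j powr \<alpha>" by blast
      also have "\<dots> \<le> G * lnorm j powr \<alpha>" using sum_nonneg by (intro mult_right_mono) (simp_all add: G_def)
      finally show ?thesis .
    qed
  qed
qed

lemma powr_le_Kbeta:
  assumes "\<beta> \<le> 0" "1 \<le> 2 * kg" "1 \<le> s"
  shows "s powr \<beta> \<le> Kbeta kg \<beta> s"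
proof -
  have "s powr \<beta> \<le> 1" and "(2*kg) powr \<beta> \<le> 1"
    using assms powr_mono[of \<beta> 0] by auto
  then have "s powr \<beta> \<le> s powr \<beta> / (2*kg) powr \<beta>"
    using assms by (simp add: le_divide_eq mult_left_le)
  with \<open>s powr \<beta> \<le> 1\<close> show ?thesis by (simp add: Kbeta_def powr_divide)
qed

definition theta_summand :: "(lat \<Rightarrow> vec3) \<Rightarrow> (lat \<Rightarrow> vec3) \<Rightarrow> (lat \<Rightarrow> complex) \<Rightarrow> real \<Rightarrow> real
    \<Rightarrow> (lat \<Rightarrow> complex) \<Rightarrow> (lat \<Rightarrow> complex) \<Rightarrow> lat \<Rightarrow> lat \<Rightarrow> complex" where
  "theta_summand ez fz \<gamma> \<beta> U V W k j =
     complex_of_real (lnorm (lsub k j) powr \<beta>) * \<gamma> j * complex_of_real U *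
       (complex_of_real (dot3 (CH_e ez (lsub k j)) (rv j)) * V (lsub k j)
      + complex_of_real (dot3 (CH_f fz (lsub k j)) (rv j)) * W (lsub k j))"

lemma theta_eq_infsum_theta_summand:
  "theta ez fz \<gamma> \<beta> U V W k = \<i> * complex_of_real (lnorm k powr (-2)) *
     infsum (theta_summand ez fz \<gamma> \<beta> U V W k) {j. j \<noteq> (0,0,0) \<and> j \<noteq> k}"
  unfolding theta_def theta_summand_def ..

lemma norm_theta_summand_le:
  assumes "axis_pair ez fz" "U \<ge> 0"
    and VW: "\<forall>m. m \<noteq> (0,0,0) \<longrightarrow> norm (V m) \<le> \<Xi> \<and> norm (W m) \<le> \<Xi>"
    and \<gamma>: "\<forall>j. j \<noteq> (0,0,0) \<longrightarrow> norm (\<gamma> j) \<le> G * lnorm j powr \<alpha>"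
    and "j \<noteq> (0,0,0)" "j \<noteq> k"
  shows "norm (theta_summand ez fz \<gamma> \<beta> U V W k j)
    \<le> 2 * G * U * \<Xi> * (lnorm (lsub k j) powr \<beta> * lnorm j powr (\<alpha> + 1))"
proof -
  define m where "m = lsub k j"
  have "m \<noteq> (0,0,0)" using \<open>j \<noteq> k\<close> lsub_eq_0_iff[of k j] by (simp add: m_def)
  then have V: "norm (V m) \<le> \<Xi>" and W: "norm (W m) \<le> \<Xi>" using VW by blast+
  have e: "\<bar>dot3 (CH_e ez m) (rv j)\<bar> \<le> lnorm j" and f: "\<bar>dot3 (CH_f fz m) (rv j)\<bar> \<le> lnorm j"
    using \<open>m \<noteq> (0,0,0)\<close> assms(1) by (simp_all add: abs_dot3_rv_le_lnorm norm_CH_e norm_CH_f)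
  have "norm (complex_of_real (dot3 (CH_e ez m) (rv j)) * V m + complex_of_real (dot3 (CH_f fz m) (rv j)) * W m)
      \<le> \<bar>dot3 (CH_e ez m) (rv j)\<bar> * norm (V m) + \<bar>dot3 (CH_f fz m) (rv j)\<bar> * norm (W m)"
    by (rule norm_triangle_le) (simp add: norm_mult)
  also have "\<dots> \<le> lnorm j * \<Xi> + lnorm j * \<Xi>"
    using e f V W by (intro add_mono mult_mono) auto
  finally have bracket: "norm (complex_of_real (dot3 (CH_e ez m) (rv j)) * V m
      + complex_of_real (dot3 (CH_f fz m) (rv j)) * W m) \<le> 2 * lnorm j * \<Xi>" by (simp add: mult_ac)
  have "norm (theta_summand ez fz \<gamma> \<beta> U V W k j) \<le> lnorm m powr \<beta> * (G * lnorm j powr \<alpha>) * U * (2 * lnorm j * \<Xi>)"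
  proof -
    have "norm (\<gamma> j) \<le> G * lnorm j powr \<alpha>" using \<gamma> \<open>j \<noteq> (0,0,0)\<close> by blast
    moreover from this have "0 \<le> G * lnorm j powr \<alpha>" using norm_ge_zero order_trans by blast
    ultimately show ?thesis
      unfolding theta_summand_def m_def[symmetric] norm_mult using assms(2)
      by (intro mult_mono bracket) auto
  qed
  also have "\<dots> = 2 * G * U * \<Xi> * (lnorm m powr \<beta> * (lnorm j powr \<alpha> * lnorm j))"
    by (simp only: mult_ac)
  also have "lnorm j powr \<alpha> * lnorm j = lnorm j powr (\<alpha> + 1)"
    using lnorm_ge_1[OF \<open>j \<noteq> (0,0,0)\<close>] by (simp add: powr_add)
  finally show ?thesis unfolding m_def .
qed

lemma norm_theta_le:
  assumes "axis_pair ez fz" "U \<ge> 0"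
    and "\<forall>m. m \<noteq> (0,0,0) \<longrightarrow> norm (V m) \<le> \<Xi> \<and> norm (W m) \<le> \<Xi>"
    and "\<forall>j. j \<noteq> (0,0,0) \<longrightarrow> norm (\<gamma> j) \<le> G * lnorm j powr \<alpha>"
    and h: "(\<lambda>j. lnorm (lsub k j) powr \<beta> * lnorm j powr (\<alpha> + 1)) summable_on {j. j \<noteq> (0,0,0) \<and> j \<noteq> k}"
  shows "norm (theta ez fz \<gamma> \<beta> U V W k) \<le> 2 * G * U * \<Xi> * lnorm k powr (-2) *
    infsum (\<lambda>j. lnorm (lsub k j) powr \<beta> * lnorm j powr (\<alpha> + 1)) {j. j \<noteq> (0,0,0) \<and> j \<noteq> k}"
proof -
  define A where "A = {j. j \<noteq> (0,0,0) \<and> j \<noteq> k}"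
  define T where "T = theta_summand ez fz \<gamma> \<beta> U V W k"
  define g where "g j = 2 * G * U * \<Xi> * (lnorm (lsub k j) powr \<beta> * lnorm j powr (\<alpha> + 1))" for j
  have T_le: "norm (T j) \<le> g j" if "j \<in> A" for j
    using norm_theta_summand_le[OF assms(1-4)] that by (simp add: T_def g_def A_def)
  have g: "g summable_on A"
    unfolding g_def A_def using h by (rule summable_on_cmult_right)
  have "T summable_on A"
    using T_le by (intro abs_summable_summable[OF summable_on_comparison_test[OF g]]) auto
  then have "norm (infsum T A) \<le> infsum g A"
    using T_le by (intro norm_infsum_le[OF has_sum_infsum has_sum_infsum[OF g]])
  also have "\<dots> = 2 * G * U * \<Xi> *
      infsum (\<lambda>j. lnorm (lsub k j) powr \<beta> * lnorm j powr (\<alpha> + 1)) A"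
    unfolding g_def by (rule infsum_cmult_right) (use h in \<open>simp add: A_def\<close>)
  finally have "lnorm k powr (-2) * norm (infsum T A) \<le> lnorm k powr (-2) * (2 * G * U * \<Xi> *
      infsum (\<lambda>j. lnorm (lsub k j) powr \<beta> * lnorm j powr (\<alpha> + 1)) A)"
    by (rule mult_left_mono) simp
  then show ?thesis
    by (simp add: theta_eq_infsum_theta_summand norm_mult T_def A_def ac_simps)
qed

theorem mainTheorem5:
  fixes \<gamma> :: "lat \<Rightarrow> complex" and cg kg \<alpha> \<beta> :: real
  assumes "cg \<ge> 0" and "kg > 1" and "\<alpha> < 0"
    and "\<forall>k. k \<noteq> (0,0,0) \<longrightarrow> \<gamma> (lneg k) = cnj (\<gamma> k)"
    and "\<forall>k. k \<noteq> (0,0,0) \<and> lnorm k \<ge> kg \<longrightarrow> norm (\<gamma> k) \<le> cg * lnorm k powr \<alpha>"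
    and "\<beta> < -2" and "kg \<ge> 16" and "\<alpha> \<le> 2 * min \<beta> (-3) - 1"
  shows "\<exists>C::real. \<forall>ez fz U \<Xi> V W. axis_pair ez fz \<and> U \<ge> 0 \<and>
     (\<forall>k. k \<noteq> (0,0,0) \<longrightarrow> norm (V k) \<le> \<Xi> \<and> norm (W k) \<le> \<Xi> \<and>
          V (lneg k) = cnj (V k) \<and> W (lneg k) = cnj (W k)) \<longrightarrow>
     (\<forall>k. k \<noteq> (0,0,0) \<longrightarrow>
        norm (theta ez fz \<gamma> \<beta> U V W k) \<le> C * U * \<Xi> * lnorm k powr (-2) * Kbeta kg \<beta> (lnorm k))"
proof -
  obtain G where "G \<ge> 0" and \<gamma>: "\<forall>j. j \<noteq> (0,0,0) \<longrightarrow> norm (\<gamma> j) \<le> G * lnorm j powr \<alpha>"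
    using lnorm_powr_bound_everywhere[OF assms(1,5)] by blast
  define D where "D = 2 powr (-\<beta>) *
    (lattice_zeta (\<alpha>+1) + (lattice_zeta (2*\<beta>) + lattice_zeta (2*(\<alpha>+1-\<beta>))) / 2)"
  have exponents: "\<beta> \<le> 0" "\<alpha> + 1 < -3" "2*\<beta> < -3" "2*(\<alpha>+1-\<beta>) < -3"
    using assms(6,8) by (auto simp: min_def split: if_splits)
  have "D \<ge> 0" by (simp add: D_def lattice_zeta_def infsum_nonneg)
  show ?thesis
  proof (intro exI[of _ "2 * G * D"] allI impI, elim conjE)
    fix ez fz :: "lat \<Rightarrow> vec3" and U \<Xi> :: real and V W :: "lat \<Rightarrow> complex" and k :: lat
    assume ax: "axis_pair ez fz" and "U \<ge> 0" and "k \<noteq> (0,0,0)"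
      and VW: "\<forall>k. k \<noteq> (0,0,0) \<longrightarrow> norm (V k) \<le> \<Xi> \<and> norm (W k) \<le> \<Xi> \<and>
          V (lneg k) = cnj (V k) \<and> W (lneg k) = cnj (W k)"
    then have VW': "\<forall>m. m \<noteq> (0,0,0) \<longrightarrow> norm (V m) \<le> \<Xi> \<and> norm (W m) \<le> \<Xi>" by blast
    then have "norm (V (1,0,0)) \<le> \<Xi>" by simp
    then have "\<Xi> \<ge> 0" by (rule order_trans[OF norm_ge_zero])
    note conv = lattice_convolution_bound[OF exponents \<open>k \<noteq> (0,0,0)\<close>]
    have "0 \<le> 2 * G * U * \<Xi> * lnorm k powr (-2)"
      using \<open>G \<ge> 0\<close> \<open>U \<ge> 0\<close> \<open>\<Xi> \<ge> 0\<close> by simp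
    have "norm (theta ez fz \<gamma> \<beta> U V W k) \<le> 2 * G * U * \<Xi> * lnorm k powr (-2) *
        infsum (\<lambda>j. lnorm (lsub k j) powr \<beta> * lnorm j powr (\<alpha> + 1)) {j. j \<noteq> (0,0,0) \<and> j \<noteq> k}"
      by (rule norm_theta_le[OF ax \<open>U \<ge> 0\<close> VW' \<gamma> conv(1)])
    also have "\<dots> \<le> 2 * G * U * \<Xi> * lnorm k powr (-2) * (D * lnorm k powr \<beta>)"
      using conv(2) unfolding D_def by (rule mult_left_mono) fact
    also have "\<dots> \<le> 2 * G * U * \<Xi> * lnorm k powr (-2) * (D * Kbeta kg \<beta> (lnorm k))"
      using powr_le_Kbeta[of \<beta> kg "lnorm k"] exponents assms(2) lnorm_ge_1[OF \<open>k \<noteq> (0,0,0)\<close>]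
        \<open>G \<ge> 0\<close> \<open>U \<ge> 0\<close> \<open>\<Xi> \<ge> 0\<close> \<open>D \<ge> 0\<close>
      by (intro mult_left_mono) auto
    finally show "norm (theta ez fz \<gamma> \<beta> U V W k) \<le> 2 * G * D * U * \<Xi> * lnorm k powr (-2) * Kbeta kg \<beta> (lnorm k)"
      by (simp only: mult_ac)
  qed
qed

end
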